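(* Under the hypotheses of the following setting: $f$ satisfies $(\mathcal A)$, $t_0>0$, $q>0$, $p>1$, $y:[t_0,+\infty[\to\mathcal H$ continuously differentiable and $\lambda:[t_0,+\infty[\to\,]0,+\infty[$ continuous with $\tau(t)=\frac{1}{q^q}\big(t_0+\int_{t_0}^t[\lambda(r)]^{1/q}dr\big)^q$, $\dot y(t)+\dot\tau(t)\nabla f(y(t))=0$ and $[\lambda(t)]^p\|\dot y(t)\|^{p-1}=1$ for all $t\ge t_0$, there exists $C_1>0$ such that $$\tau(t)\ge C_1(t-t_0)^{1+q-\frac1p}\qquad\forall t\ge t_0 .$$
   Context: $\mathcal H$ is a real Hilbert space. Assumption $(\mathcal A)$: $f:\mathcal H\to\mathbb R$ is convex and continuously differentiable, $\operatorname{argmin}_{\mathcal H} f\neq\emptyset$, and $\nabla f$ is Lipschitz continuous on bounded subsets of $\mathcal H$. *)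

theory Defs
  imports "HOL-Analysis.Analysis"
begin

definition assumption_A :: "('a::{real_inner,complete_space} \<Rightarrow> real) \<Rightarrow> ('a \<Rightarrow> 'a) \<Rightarrow> bool" where
  "assumption_A f gradf \<longleftrightarrow>
     convex_on UNIV f \<and>
     (\<forall>x. (f has_derivative (\<lambda>h. gradf x \<bullet> h)) (at x)) \<and>
     continuous_on UNIV gradf \<and>
     (\<exists>x. \<forall>z. f x \<le> f z) \<and>
     (\<forall>B. bounded B \<longrightarrow> (\<exists>L. L-lipschitz_on B gradf))"

definition tau_fun :: "real \<Rightarrow> real \<Rightarrow> (real \<Rightarrow> real) \<Rightarrow> real \<Rightarrow> real" where
  "tau_fun t0 q lam t = (1 / q powr q) * (t0 + integral {t0..t} (\<lambda>r. lam r powr (1/q))) powr q"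

end

theory Submission
  imports Defs
begin

text \<open>The energy \<open>E = \<tau> (f y - min f) + \<parallel>y - z\<parallel>\<^sup>2 / 2\<close> is nonnegative and decreases at
  rate at least \<open>\<tau> \<tau>' \<parallel>\<nabla>f y\<parallel>\<^sup>2\<close>. Taking logarithms, the normalisation
  \<open>\<lambda>^p \<parallel>y'\<parallel>^(p-1) = 1\<close> and the identity \<open>\<tau>'^q = \<tau>^(q-1) \<lambda>\<close> coming from the definition of
  \<open>\<tau>\<close> express this rate as \<open>u'^(-m)\<close> for \<open>u = \<tau>^\<gamma> / \<gamma>\<close>, where \<open>\<gamma> = 2p / (p - 1 + 2pq)\<close>
  and \<open>m = (p - 1 + 2pq) / (p - 1)\<close>. Hence \<open>u'^(-m)\<close> has integral at most \<open>E t\<^sub>0\<close>, and a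
  reverse H\<ouml>lder argument, run pointwise through Young's inequality, gives
  \<open>u T - u t\<^sub>0 \<ge> K^(-1/m) (T - t\<^sub>0)^(1+1/m)\<close>. Since \<open>(1 + 1/m) / \<gamma> = 1 + q - 1/p\<close>, the claim
  follows.\<close>

lemma convex_on_imp_above_linearization:
  fixes f :: "'a::real_normed_vector \<Rightarrow> real"
  assumes convex: "convex_on UNIV f" and deriv: "(f has_derivative f') (at x)"
  shows "f x + f' (z - x) \<le> f z"
proof -
  define g where "g s = f (x + s *\<^sub>R (z - x))" for s :: real
  have "convex_on UNIV g"
  proof (rule convex_onI)
    fix t a b :: real assume "0 < t" "t < 1"
    moreover have "x + ((1 - t) * a + t * b) *\<^sub>R (z - x)
        = (1 - t) *\<^sub>R (x + a *\<^sub>R (z - x)) + t *\<^sub>R (x + b *\<^sub>R (z - x))"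
      by (simp add: algebra_simps)
    ultimately show "g ((1 - t) *\<^sub>R a + t *\<^sub>R b) \<le> (1 - t) * g a + t * g b"
      unfolding g_def using convex_onD[OF convex, of t] by auto
  qed simp
  moreover have "(g has_field_derivative f' (z - x)) (at 0)"
  proof -
    have "((\<lambda>s. x + s *\<^sub>R (z - x)) has_derivative (\<lambda>s. s *\<^sub>R (z - x))) (at 0)"
      by (auto intro!: derivative_eq_intros)
    from has_derivative_compose[OF this] deriv
    have "(g has_derivative (\<lambda>s. f' (s *\<^sub>R (z - x)))) (at 0)"
      unfolding g_def by simp
    moreover have "(\<lambda>s. f' (s *\<^sub>R (z - x))) = (*) (f' (z - x))"
      using has_derivative_bounded_linear[OF deriv] by (auto simp: linear_simps fun_eq_iff)
    ultimately show ?thesis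
      by (simp add: has_field_derivative_def)
  qed
  ultimately have "f' (z - x) * (1 - 0) \<le> g 1 - g 0"
    by (intro convex_on_imp_above_tangent) auto
  then show ?thesis unfolding g_def by simp
qed

lemma DERIV_within_nonneg_imp_nondecreasing:
  fixes f f' :: "real \<Rightarrow> real"
  assumes "a \<le> b"
    and deriv: "\<And>x. x \<in> {a..b} \<Longrightarrow> (f has_real_derivative f' x) (at x within {a..b})"
    and nonneg: "\<And>x. x \<in> {a..b} \<Longrightarrow> f' x \<ge> 0"
  shows "f a \<le> f b"
proof (rule DERIV_nonneg_imp_increasing_open[OF \<open>a \<le> b\<close>])
  fix x assume "a < x" "x < b"
  then show "\<exists>y. (f has_real_derivative y) (at x) \<and> 0 \<le> y"
    using deriv[of x] nonneg[of x] by (auto simp: at_within_Icc_at)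
next
  show "continuous_on {a..b} f"
    unfolding continuous_on_eq_continuous_within using deriv DERIV_continuous by blast
qed

lemma Youngs_inequality_reciprocal:
  fixes a b m :: real
  assumes "m > 0" "a > 0" "b > 0" "a powr m * b = 1"
  shows "m + 1 \<le> m * a + b"
proof -
  have "(a powr m * b) powr (1 / (m + 1)) = a powr (m / (m + 1)) * b powr (1 / (m + 1))"
    using assms(1-3) by (simp add: powr_mult powr_powr)
  then have "a powr (m / (m + 1)) * b powr (1 / (m + 1)) = 1"
    using assms by simp
  then have "1 \<le> m / (m + 1) * a + 1 / (m + 1) * b"
    using Youngs_inequality_0[of "m / (m + 1)" "1 / (m + 1)" a b] assms
    by (simp add: add_divide_distrib[symmetric])
  also have "\<dots> = (m * a + b) / (m + 1)"
    by (simp add: add_divide_distrib)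
  finally show ?thesis
    using assms by (simp add: le_divide_eq)
qed

lemma growth_from_dissipation:
  fixes u u' E E' :: "real \<Rightarrow> real"
  assumes m: "m > 0" and K: "K > 0" "E t0 \<le> K" and T: "T \<ge> t0"
    and u_deriv: "\<And>t. t \<ge> t0 \<Longrightarrow> (u has_real_derivative u' t) (at t within {t0..})"
    and E_deriv: "\<And>t. t \<ge> t0 \<Longrightarrow> (E has_real_derivative E' t) (at t within {t0..})"
    and u'_pos: "\<And>t. t \<ge> t0 \<Longrightarrow> u' t > 0"
    and E_nonneg: "\<And>t. t \<ge> t0 \<Longrightarrow> E t \<ge> 0"
    and dissipation: "\<And>t. t \<ge> t0 \<Longrightarrow> E' t \<le> - (u' t powr (- m))"
  shows "K powr (- 1 / m) * (T - t0) powr (1 + 1 / m) \<le> u T - u t0"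
proof (cases "T = t0")
  case False
  with T have T: "T > t0" by simp
  define M where "M = (T - t0) / K"
  define \<mu> where "\<mu> = M powr (- 1 / m)"
  have M: "M > 0" and \<mu>: "\<mu> > 0" using T K by (simp_all add: M_def \<mu>_def)
  have \<mu>_powr_m: "\<mu> powr m * M = 1"
    unfolding \<mu>_def powr_powr using M m by (simp add: powr_minus)
  \<comment> \<open>The reverse H\<ouml>lder step: since \<open>\<mu>^m M = 1\<close>, Young's inequality makes \<open>\<phi>\<close>
    nondecreasing, and \<open>M K = T - t0\<close> balances the energy term against the elapsed time.\<close>
  define \<phi> where "\<phi> t = m * \<mu> * u t - M * E t - (m + 1) * t" for t
  define \<phi>' where "\<phi>' t = m * \<mu> * u' t - M * E' t - (m + 1)" for t
  have "\<phi> t0 \<le> \<phi> T"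
  proof (rule DERIV_within_nonneg_imp_nondecreasing[where f = \<phi> and f' = \<phi>'])
    fix t assume t: "t \<in> {t0..T}"
    have "(\<phi> has_real_derivative \<phi>' t) (at t within {t0..})"
      unfolding \<phi>_def \<phi>'_def using t by (auto intro!: derivative_eq_intros u_deriv E_deriv)
    then show "(\<phi> has_real_derivative \<phi>' t) (at t within {t0..T})"
      by (rule DERIV_subset) auto
    have "(\<mu> * u' t) powr m * (M * u' t powr (- m)) = 1"
      using t u'_pos[of t] \<mu> M \<mu>_powr_m by (simp add: powr_mult powr_minus field_simps)
    then have "m + 1 \<le> m * (\<mu> * u' t) + M * u' t powr (- m)"
      using t u'_pos[of t] \<mu> M m by (intro Youngs_inequality_reciprocal) auto
    moreover have "M * E' t \<le> - (M * u' t powr (- m))"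
      using mult_left_mono[OF dissipation[of t], of M] t M by simp
    ultimately show "\<phi>' t \<ge> 0"
      by (simp add: \<phi>'_def algebra_simps)
  qed (use T in auto)
  then have "(m + 1) * (T - t0) \<le> m * \<mu> * (u T - u t0) + M * (E t0 - E T)"
    by (simp add: \<phi>_def algebra_simps)
  moreover have "M * (E t0 - E T) \<le> T - t0"
  proof -
    have "M * (E t0 - E T) \<le> M * K"
      using M K E_nonneg[of T] T by (intro mult_left_mono) auto
    then show ?thesis using K by (simp add: M_def)
  qed
  ultimately have "m * (T - t0) \<le> m * (\<mu> * (u T - u t0))"
    by (simp add: algebra_simps)
  then have "T - t0 \<le> \<mu> * (u T - u t0)"
    using m by simp
  then have "(T - t0) / \<mu> \<le> u T - u t0"
    using \<mu> by (simp add: divide_le_eq mult.commute)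
  moreover have "(T - t0) / \<mu> = K powr (- 1 / m) * (T - t0) powr (1 + 1 / m)"
    using T K by (simp add: \<mu>_def M_def powr_minus_divide powr_divide powr_add field_simps)
  ultimately show ?thesis by simp
qed simp

lemma tau_fun_base_pos:
  fixes lam :: "real \<Rightarrow> real"
  assumes t0: "t0 > 0" and lam_cont: "continuous_on {t0..} lam"
    and lam_pos: "\<And>t. t \<ge> t0 \<Longrightarrow> lam t > 0" and t: "t \<ge> t0"
  shows "t0 + integral {t0..t} (\<lambda>r. lam r powr (1 / q)) > 0"
proof -
  have "continuous_on {t0..t} (\<lambda>r. lam r powr (1 / q))"
    using lam_pos
    by (intro continuous_on_powr continuous_on_subset[OF lam_cont] continuous_on_const)
      (auto simp: less_imp_neq[symmetric])
  then have "integral {t0..t} (\<lambda>r. lam r powr (1 / q)) \<ge> 0"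
    by (intro integral_nonneg integrable_continuous_interval) auto
  then show ?thesis
    using t0 by simp
qed

lemma tau_fun_pos:
  assumes "q > 0" "t0 > 0" "continuous_on {t0..} lam" "\<And>t. t \<ge> t0 \<Longrightarrow> lam t > 0" "t \<ge> t0"
  shows "tau_fun t0 q lam t > 0"
  using tau_fun_base_pos[OF assms(2-), of q] assms(1) by (simp add: tau_fun_def)

lemma tau_fun_derivative:
  assumes t0: "t0 > 0" and q: "q > 0" and lam_cont: "continuous_on {t0..} lam"
    and lam_pos: "\<And>t. t \<ge> t0 \<Longrightarrow> lam t > 0" and t: "t \<ge> t0"
    and deriv: "(tau_fun t0 q lam has_real_derivative d) (at t within {t0..})"
  shows "d > 0" and "d powr q = tau_fun t0 q lam t powr (q - 1) * lam t"
proof -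
  define S where "S u = t0 + integral {t0..u} (\<lambda>r. lam r powr (1 / q))" for u
  have S_pos: "S t > 0"
    unfolding S_def by (rule tau_fun_base_pos[OF t0 lam_cont lam_pos t])
  have "continuous_on {t0..t + 1} (\<lambda>r. lam r powr (1 / q))"
    using lam_pos
    by (intro continuous_on_powr continuous_on_subset[OF lam_cont] continuous_on_const)
      (auto simp: less_imp_neq[symmetric])
  then have "(S has_real_derivative lam t powr (1 / q)) (at t within {t0..t + 1})"
    unfolding S_def using t by (auto intro!: derivative_eq_intros integral_has_real_derivative)
  then have "(tau_fun t0 q lam has_real_derivative
      1 / q powr q * (q * S t powr (q - 1) * lam t powr (1 / q))) (at t within {t0..t + 1})"
    unfolding tau_fun_def S_def[symmetric] using S_pos q
    by (auto intro!: derivative_eq_intros)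
  moreover have "(tau_fun t0 q lam has_real_derivative d) (at t within {t0..t + 1})"
    using deriv by (rule DERIV_subset) auto
  ultimately have d: "d = q powr (1 - q) * S t powr (q - 1) * lam t powr (1 / q)"
    using t q S_pos
    by (subst has_field_derivative_unique) (auto simp: trivial_limit_within powr_diff field_simps)
  then show "d > 0"
    using S_pos lam_pos[OF t] q by simp
  show "d powr q = tau_fun t0 q lam t powr (q - 1) * lam t"
    using S_pos lam_pos[OF t] q
    by (simp add: d tau_fun_def S_def[symmetric] powr_mult powr_powr powr_divide field_simps
        flip: powr_add)
qed

lemma energy_has_real_derivative:
  fixes f :: "'a::real_inner \<Rightarrow> real" and y :: "real \<Rightarrow> 'a"
  assumes y: "(y has_vector_derivative v) (at t within S)"
    and \<tau>: "(\<tau> has_real_derivative d) (at t within S)"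
    and f: "(f has_derivative (\<lambda>h. g \<bullet> h)) (at (y t))"
  shows "((\<lambda>s. \<tau> s * (f (y s) - c) + (norm (y s - z))\<^sup>2 / 2) has_real_derivative
      d * (f (y t) - c) + \<tau> t * (g \<bullet> v) + (y t - z) \<bullet> v) (at t within S)"
proof -
  have y': "(y has_derivative (\<lambda>h. h *\<^sub>R v)) (at t within S)"
    using y by (simp add: has_vector_derivative_def)
  have "((\<lambda>s. f (y s)) has_derivative (\<lambda>h. g \<bullet> (h *\<^sub>R v))) (at t within S)"
    using has_derivative_compose[OF y' f] .
  then have "((\<lambda>s. f (y s)) has_real_derivative g \<bullet> v) (at t within S)"
    by (simp add: has_field_derivative_def mult_commute_abs)
  then have "((\<lambda>s. \<tau> s * (f (y s) - c)) has_real_derivative d * (f (y t) - c) + \<tau> t * (g \<bullet> v))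
      (at t within S)"
    using \<tau> by (auto intro!: derivative_eq_intros)
  moreover have "((\<lambda>s. y s - z) has_derivative (\<lambda>h. h *\<^sub>R v)) (at t within S)"
    using y' by (auto intro!: derivative_eq_intros)
  then have "((\<lambda>s. (y s - z) \<bullet> (y s - z)) has_derivative
      (\<lambda>h. (y t - z) \<bullet> (h *\<^sub>R v) + (h *\<^sub>R v) \<bullet> (y t - z))) (at t within S)"
    by (intro has_derivative_inner)
  then have "((\<lambda>s. (norm (y s - z))\<^sup>2) has_real_derivative 2 * ((y t - z) \<bullet> v)) (at t within S)"
    unfolding power2_norm_eq_inner has_field_derivative_def
    by (rule has_derivative_eq_rhs) (auto simp: fun_eq_iff inner_commute)
  then have "((\<lambda>s. (norm (y s - z))\<^sup>2 / 2) has_real_derivative (y t - z) \<bullet> v) (at t within S)"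
    using DERIV_cdivide[of _ _ _ _ 2] by fastforce
  ultimately show ?thesis
    by (rule DERIV_add)
qed

lemma energy_derivative_le:
  fixes f :: "'a::real_inner \<Rightarrow> real"
  assumes "convex_on UNIV f" "(f has_derivative (\<lambda>h. gradf x \<bullet> h)) (at x)"
    and "d \<ge> 0" and "v = - (d *\<^sub>R gradf x)"
  shows "d * (f x - f z) + \<tau> * (gradf x \<bullet> v) + (x - z) \<bullet> v \<le> - (\<tau> * d * (norm (gradf x))\<^sup>2)"
proof -
  have "f x + gradf x \<bullet> (z - x) \<le> f z"
    using convex_on_imp_above_linearization[OF assms(1,2)] .
  then have "d * (f x - f z + gradf x \<bullet> (z - x)) \<le> 0"
    using assms(3) by (simp add: mult_nonneg_nonpos)
  then show ?thesis
    using assms(4) by (simp add: power2_norm_eq_inner inner_diff_right inner_commute algebra_simps)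
qed

lemma dissipation_rate_eq:
  fixes \<tau> \<tau>' l g q p :: real
  defines "m \<equiv> (p - 1 + 2 * p * q) / (p - 1)" and "\<gamma> \<equiv> 2 * p / (p - 1 + 2 * p * q)"
  assumes pos: "\<tau> > 0" "\<tau>' > 0" "l > 0" "g \<ge> 0" and q: "q > 0" and p: "p > 1"
    and time_change: "\<tau>' powr q = \<tau> powr (q - 1) * l"
    and normalization: "l powr p * (\<tau>' * g) powr (p - 1) = 1"
  shows "\<tau> * \<tau>' * g\<^sup>2 = (\<tau> powr (\<gamma> - 1) * \<tau>') powr (- m)"
proof -
  have g: "g > 0"
    using normalization pos by (cases "g = 0") auto
  have D: "p - 1 + 2 * p * q > 0" using p q by (simp add: add_pos_pos)
  define L where "L = ln \<tau>"
  define L' where "L' = ln \<tau>'"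
  define G where "G = ln g"
  define \<Lambda> where "\<Lambda> = ln l"
  have "q * L' = (q - 1) * L + \<Lambda>"
    using arg_cong[OF time_change, of ln] pos by (simp add: L_def L'_def \<Lambda>_def ln_mult ln_powr)
  moreover have "p * \<Lambda> + (p - 1) * (L' + G) = 0"
    using arg_cong[OF normalization, of ln] pos g by (simp add: L'_def G_def \<Lambda>_def ln_mult ln_powr)
  ultimately have "(p - 1) * (L + L' + 2 * G) = (p - 1 + 2 * p * (q - 1)) * L - (p - 1 + 2 * p * q) * L'"
    by algebra
  also have "\<dots> = (p - 1) * (- m * ((\<gamma> - 1) * L + L'))"
  proof -
    have "(p - 1) * m = p - 1 + 2 * p * q" and "(p - 1 + 2 * p * q) * \<gamma> = 2 * p"
      using p D by (simp_all add: m_def \<gamma>_def)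
    then show ?thesis by algebra
  qed
  finally have ln_eq: "L + L' + 2 * G = - m * ((\<gamma> - 1) * L + L')"
    using p by (subst (asm) mult_left_cancel) simp_all
  have "ln (\<tau> * \<tau>' * g\<^sup>2) = L + L' + 2 * G"
    using pos g by (simp add: L_def L'_def G_def ln_mult ln_realpow)
  also have "\<dots> = - m * ((\<gamma> - 1) * L + L')"
    by (rule ln_eq)
  also have "\<dots> = ln ((\<tau> powr (\<gamma> - 1) * \<tau>') powr (- m))"
    using pos by (simp add: L_def L'_def ln_mult ln_powr)
  finally show ?thesis
    using pos g by (subst (asm) ln_inj_iff) simp_all
qed

lemma mult_powr_le_powr_root:
  fixes c s e \<gamma> x :: real
  assumes "\<gamma> > 0" "c \<ge> 0" "x \<ge> 0" "c * s powr e \<le> x powr \<gamma>"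
  shows "c powr (1 / \<gamma>) * s powr (e / \<gamma>) \<le> x"
proof -
  have "(c * s powr e) powr (1 / \<gamma>) \<le> (x powr \<gamma>) powr (1 / \<gamma>)"
    using assms by (intro powr_mono2) auto
  then show ?thesis
    using assms by (simp add: powr_mult powr_powr)
qed

lemma growth_exponent:
  fixes q p :: real
  defines "m \<equiv> (p - 1 + 2 * p * q) / (p - 1)" and "\<gamma> \<equiv> 2 * p / (p - 1 + 2 * p * q)"
  assumes q: "q > 0" and p: "p > 1"
  shows "\<gamma> > 0" and "(1 + 1 / m) / \<gamma> = 1 + q - 1 / p"
proof -
  have D: "p - 1 + 2 * p * q > 0"
    using p q by (simp add: add_pos_pos)
  then show "\<gamma> > 0"
    using p by (simp add: \<gamma>_def)
  have m_exponent: "1 + 1 / m = 2 * (p - 1 + p * q) / (p - 1 + 2 * p * q)"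
    using p D by (simp add: m_def field_simps)
  have "(1 + 1 / m) / \<gamma> = 2 * (p - 1 + p * q) / (2 * p)"
    unfolding m_exponent \<gamma>_def using D by simp
  also have "\<dots> = 1 + q - 1 / p"
    using p by (simp add: field_simps)
  finally show "(1 + 1 / m) / \<gamma> = 1 + q - 1 / p" .
qed

lemma tau_fun_powr_growth:
  fixes f :: "'a::real_inner \<Rightarrow> real" and gradf :: "'a \<Rightarrow> 'a"
    and y y' :: "real \<Rightarrow> 'a" and lam tau' :: "real \<Rightarrow> real" and t0 q p :: real
  defines "m \<equiv> (p - 1 + 2 * p * q) / (p - 1)" and "\<gamma> \<equiv> 2 * p / (p - 1 + 2 * p * q)"
  assumes convex: "convex_on UNIV f"
    and grad: "\<And>x. (f has_derivative (\<lambda>h. gradf x \<bullet> h)) (at x)"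
    and minimizer: "\<And>w. f z \<le> f w"
    and t0: "t0 > 0" and q: "q > 0" and p: "p > 1"
    and y_deriv: "\<And>t. t \<ge> t0 \<Longrightarrow> (y has_vector_derivative y' t) (at t within {t0..})"
    and lam_cont: "continuous_on {t0..} lam"
    and lam_pos: "\<And>t. t \<ge> t0 \<Longrightarrow> lam t > 0"
    and tau_deriv: "\<And>t. t \<ge> t0 \<Longrightarrow> (tau_fun t0 q lam has_real_derivative tau' t) (at t within {t0..})"
    and ode: "\<And>t. t \<ge> t0 \<Longrightarrow> y' t + tau' t *\<^sub>R gradf (y t) = 0"
    and lam_norm: "\<And>t. t \<ge> t0 \<Longrightarrow> lam t powr p * norm (y' t) powr (p - 1) = 1"
  obtains K where "K > 0"
    and "\<And>T. T \<ge> t0 \<Longrightarrow>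
      K powr (- 1 / m) * (T - t0) powr (1 + 1 / m) \<le> tau_fun t0 q lam T powr \<gamma> / \<gamma>"
proof -
  define \<tau> where "\<tau> = tau_fun t0 q lam"
  have \<tau>_pos: "\<tau> t > 0" if "t \<ge> t0" for t
    unfolding \<tau>_def using tau_fun_pos[OF q t0 lam_cont lam_pos that] .
  have \<tau>'_pos: "tau' t > 0" and time_change: "tau' t powr q = \<tau> t powr (q - 1) * lam t"
    if "t \<ge> t0" for t
    unfolding \<tau>_def using tau_fun_derivative[OF t0 q lam_cont lam_pos that tau_deriv[OF that]] by auto
  have m: "m > 0"
    using p q by (simp add: m_def add_pos_pos)
  have \<gamma>: "\<gamma> > 0"
    unfolding \<gamma>_def using growth_exponent(1)[OF q p] .
  define u where "u s = \<tau> s powr \<gamma> / \<gamma>" for s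
  define u' where "u' s = \<tau> s powr (\<gamma> - 1) * tau' s" for s
  define E where "E s = \<tau> s * (f (y s) - f z) + (norm (y s - z))\<^sup>2 / 2" for s
  define E' where "E' s = tau' s * (f (y s) - f z) + \<tau> s * (gradf (y s) \<bullet> y' s) + (y s - z) \<bullet> y' s" for s
  have E_nonneg: "E t \<ge> 0" if "t \<ge> t0" for t
    using \<tau>_pos[OF that] minimizer[of "y t"] by (simp add: E_def)
  have growth: "(E t0 + 1) powr (- 1 / m) * (T - t0) powr (1 + 1 / m) \<le> u T - u t0"
    if "T \<ge> t0" for T
  proof (rule growth_from_dissipation[where E = E and E' = E' and u' = u'])
    fix t assume t: "t \<ge> t0"
    show "(u has_real_derivative u' t) (at t within {t0..})"
      unfolding u_def u'_def using \<tau>_pos[OF t] \<gamma> tau_deriv[OF t]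
      by (auto intro!: derivative_eq_intros simp: \<tau>_def)
    show "(E has_real_derivative E' t) (at t within {t0..})"
      unfolding E_def E'_def \<tau>_def by (intro energy_has_real_derivative y_deriv tau_deriv grad t)
    show "u' t > 0" using \<tau>_pos[OF t] \<tau>'_pos[OF t] by (simp add: u'_def)
    show "E t \<ge> 0" using E_nonneg[OF t] .
    have y': "y' t = - (tau' t *\<^sub>R gradf (y t))"
      using ode[OF t] by (simp add: eq_neg_iff_add_eq_0)
    have "E' t \<le> - (\<tau> t * tau' t * (norm (gradf (y t)))\<^sup>2)"
      unfolding E'_def using \<tau>'_pos[OF t]
      by (intro energy_derivative_le[where gradf = gradf] convex grad y') simp
    also have "\<tau> t * tau' t * (norm (gradf (y t)))\<^sup>2 = u' t powr (- m)"
      unfolding u'_def m_def \<gamma>_def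
      using lam_norm[OF t] y' time_change[OF t] \<tau>_pos[OF t] \<tau>'_pos[OF t] lam_pos[OF t] q p
      by (intro dissipation_rate_eq) auto
    finally show "E' t \<le> - (u' t powr (- m))" .
  qed (use m E_nonneg[of t0] that in auto)
  show thesis
  proof
    show "E t0 + 1 > 0" using E_nonneg[of t0] by simp
    fix T assume "T \<ge> t0"
    moreover have "u t0 \<ge> 0" using \<gamma> by (simp add: u_def)
    ultimately show "(E t0 + 1) powr (- 1 / m) * (T - t0) powr (1 + 1 / m) \<le> tau_fun t0 q lam T powr \<gamma> / \<gamma>"
      using growth[of T] by (simp add: u_def \<tau>_def)
  qed
qed

theorem mainTheorem4:
  fixes f :: "'a::{real_inner,complete_space} \<Rightarrow> real"
    and gradf :: "'a \<Rightarrow> 'a"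
    and y y' :: "real \<Rightarrow> 'a"
    and lam tau' :: "real \<Rightarrow> real"
    and t0 q p :: real
  assumes A: "assumption_A f gradf"
    and t0: "t0 > 0" and q: "q > 0" and p: "p > 1"
    and y_deriv: "\<forall>t\<ge>t0. (y has_vector_derivative y' t) (at t within {t0..})"
    and y'_cont: "continuous_on {t0..} y'"
    and lam_cont: "continuous_on {t0..} lam"
    and lam_pos: "\<forall>t\<ge>t0. lam t > 0"
    and tau_deriv: "\<forall>t\<ge>t0. (tau_fun t0 q lam has_real_derivative tau' t) (at t within {t0..})"
    and ode: "\<forall>t\<ge>t0. y' t + tau' t *\<^sub>R gradf (y t) = 0"
    and lam_norm: "\<forall>t\<ge>t0. lam t powr p * norm (y' t) powr (p - 1) = 1"
  shows "\<exists>C1>0. \<forall>t\<ge>t0. tau_fun t0 q lam t \<ge> C1 * (t - t0) powr (1 + q - 1 / p)"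
proof -
  define m where "m = (p - 1 + 2 * p * q) / (p - 1)"
  define \<gamma> where "\<gamma> = 2 * p / (p - 1 + 2 * p * q)"
  have \<gamma>: "\<gamma> > 0" and exponent: "(1 + 1 / m) / \<gamma> = 1 + q - 1 / p"
    unfolding m_def \<gamma>_def using growth_exponent[OF q p] by auto
  obtain z where convex: "convex_on UNIV f"
    and grad: "\<And>x. (f has_derivative (\<lambda>h. gradf x \<bullet> h)) (at x)"
    and minimizer: "\<And>w. f z \<le> f w"
    using A unfolding assumption_A_def by blast
  obtain K where K: "K > 0"
    and growth: "\<And>T. T \<ge> t0 \<Longrightarrow>
      K powr (- 1 / m) * (T - t0) powr (1 + 1 / m) \<le> tau_fun t0 q lam T powr \<gamma> / \<gamma>"
    unfolding m_def \<gamma>_def using tau_fun_powr_growth[OF convex grad minimizer t0 q p]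
      y_deriv lam_cont lam_pos tau_deriv ode lam_norm by blast
  define C1 where "C1 = (\<gamma> * K powr (- 1 / m)) powr (1 / \<gamma>)"
  have "C1 * (t - t0) powr (1 + q - 1 / p) \<le> tau_fun t0 q lam t" if "t \<ge> t0" for t
    unfolding C1_def exponent[symmetric]
    using growth[OF that] \<gamma> tau_fun_pos[OF q t0 lam_cont _ that] lam_pos
    by (intro mult_powr_le_powr_root) (auto simp: field_simps)
  moreover have "C1 > 0"
    using \<gamma> K by (simp add: C1_def)
  ultimately show ?thesis by blast
qed

end
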